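(* Let $b\ge 2$. For every finite nonempty string $I$ of base-$b$ digits there exist infinitely many $b$-wARH numbers whose base-$b$ representation contains $I$ as a contiguous substring.
   Context: Fix a base $b\ge 2$. $s_b(N)$ is the sum of the base-$b$ digits of $N$. For a positive integer $X$, its reversal $X^R$ is the integer whose base-$b$ representation is that of $X$ written in reverse order (leading zeros of the result are dropped). A positive integer $N$ is a $b$-wARH number if there exists an integer $A\ge 0$ such that $N=(A+s_b(N))+(A+s_b(N))^R$. *)

theory Defs
  imports Main
begin

fun digits :: "nat \<Rightarrow> nat \<Rightarrow> nat list" where
  "digits b n = (if b < 2 \<or> n = 0 then [] else n mod b # digits b (n div b))"

declare digits.simps[simp del]

(* value of a digit list, most significant first *)
definition from_digits :: "nat \<Rightarrow> nat list \<Rightarrow> nat" where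
  "from_digits b ds = foldl (\<lambda>acc d. acc * b + d) 0 ds"

definition repr :: "nat \<Rightarrow> nat \<Rightarrow> nat list" where
  "repr b n = rev (digits b n)"

definition digit_sum :: "nat \<Rightarrow> nat \<Rightarrow> nat" where
  "digit_sum b n = sum_list (digits b n)"

(* reversal: read the representation backwards; leading zeros vanish in the value *)
definition reversal :: "nat \<Rightarrow> nat \<Rightarrow> nat" where
  "reversal b x = from_digits b (rev (repr b x))"

definition wARH :: "nat \<Rightarrow> nat \<Rightarrow> bool" where
  "wARH b N \<longleftrightarrow> N > 0 \<and>
     (\<exists>A::nat. N = (A + digit_sum b N) + reversal b (A + digit_sum b N))"

definition contiguous_sub :: "'a list \<Rightarrow> 'a list \<Rightarrow> bool" where
  "contiguous_sub I xs \<longleftrightarrow> (\<exists>u v. xs = u @ I @ v)"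

end

theory Submission
  imports Defs "HOL-Library.Infinite_Set"
begin

text \<open>Let \<open>a\<close> be the number whose representation is \<open>1 # I\<close>, and put \<open>M = a * b^z\<close>.
  Trailing zeros disappear under reversal, so \<open>M\<^sup>R = a\<^sup>R\<close>, and for \<open>z\<close> at least the number of digits of
  \<open>a\<close> the number \<open>N = M + a\<^sup>R\<close> is written as \<open>1 # I\<close> followed by \<open>z\<close> low digits. Its digit
  sum is at most \<open>z (b - 1) + a \<le> M\<close>, so \<open>A = M - s(N)\<close> gives \<open>A + s(N) = M\<close> and
  \<open>N = M + M\<^sup>R\<close>: every such \<open>N\<close> is wARH, and they grow without bound with \<open>z\<close>.\<close>

lemma digits_0 [simp]: "digits b 0 = []"
  by (simp add: digits.simps)

lemma digits_nonzero: "b \<ge> 2 \<Longrightarrow> n > 0 \<Longrightarrow> digits b n = n mod b # digits b (n div b)"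
  by (simp add: digits.simps)

lemma digits_less_base: "b \<ge> 2 \<Longrightarrow> d \<in> set (digits b n) \<Longrightarrow> d < b"
proof (induction n rule: less_induct)
  case (less n)
  show ?case
  proof (cases "n = 0")
    case False
    then have "d = n mod b \<or> d \<in> set (digits b (n div b))"
      using less.prems digits_nonzero by simp
    then show ?thesis
      using less.prems less.IH[of "n div b"] False by auto
  qed (use less.prems in simp)
qed

lemma digit_sum_le: "b \<ge> 2 \<Longrightarrow> digit_sum b n \<le> n"
proof (induction n rule: less_induct)
  case (less n)
  show ?case
  proof (cases "n = 0")
    case False
    then have "digit_sum b n = n mod b + digit_sum b (n div b)"
      using less.prems by (simp add: digit_sum_def digits_nonzero)
    also have "\<dots> \<le> n mod b + n div b"
      using less.IH[of "n div b"] less.prems False by simp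
    also have "\<dots> \<le> n mod b + n div b * b"
      using less.prems by (intro add_left_mono) simp
    also have "\<dots> = n"
      by (rule mod_div_mult_eq)
    finally show ?thesis .
  qed (simp add: digit_sum_def)
qed

fun padded_digits :: "nat \<Rightarrow> nat \<Rightarrow> nat \<Rightarrow> nat list" where
  "padded_digits b 0 c = []"
| "padded_digits b (Suc z) c = c mod b # padded_digits b z (c div b)"

lemma length_padded_digits [simp]: "length (padded_digits b z c) = z"
  by (induction z arbitrary: c) auto

lemma padded_digits_0: "padded_digits b z 0 = replicate z 0"
  by (induction z) auto

lemma padded_digits_less_base: "b \<ge> 2 \<Longrightarrow> d \<in> set (padded_digits b z c) \<Longrightarrow> d < b"
  by (induction z arbitrary: c) auto

lemma digits_mult_power_add:
  assumes "b \<ge> 2" "a > 0" "c < b ^ z"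
  shows "digits b (a * b ^ z + c) = padded_digits b z c @ digits b a"
  using assms(3)
proof (induction z arbitrary: c)
  case (Suc z)
  have split: "a * b ^ Suc z + c = (a * b ^ z + c div b) * b + c mod b"
    by (simp add: algebra_simps)
  have "(a * b ^ Suc z + c) mod b = c mod b"
    by (subst split) simp
  moreover have "(a * b ^ Suc z + c) div b = a * b ^ z + c div b"
    using assms(1) by (subst split) simp
  moreover have "c div b < b ^ z"
    using Suc.prems assms(1) by (simp add: less_mult_imp_div_less mult.commute)
  ultimately show ?case
    using assms Suc.IH digits_nonzero[of b "a * b ^ Suc z + c"] by simp
qed simp

lemma repr_mult_power_add:
  "b \<ge> 2 \<Longrightarrow> a > 0 \<Longrightarrow> c < b ^ z \<Longrightarrow>
    repr b (a * b ^ z + c) = repr b a @ rev (padded_digits b z c)"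
  by (simp add: repr_def digits_mult_power_add)

lemma from_digits_snoc: "from_digits b (xs @ [d]) = from_digits b xs * b + d"
  by (simp add: from_digits_def)

lemma from_digits_replicate_0_append: "from_digits b (replicate z 0 @ xs) = from_digits b xs"
proof -
  have "foldl (\<lambda>acc d. acc * b + d) 0 (replicate z 0) = 0"
    by (induction z) auto
  then show ?thesis
    by (simp add: from_digits_def)
qed

lemma from_digits_less_power:
  assumes "b \<ge> 2" "\<forall>d \<in> set xs. d < b"
  shows "from_digits b xs < b ^ length xs"
  using assms(2)
proof (induction xs rule: rev_induct)
  case (snoc d xs)
  then have "from_digits b xs * b + d < (from_digits b xs + 1) * b"
    by simp
  also have "\<dots> \<le> b ^ length xs * b"
    using snoc by (intro mult_le_mono1) simp
  finally show ?case
    by (simp add: from_digits_snoc mult.commute)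
qed (simp add: from_digits_def)

lemma padded_digits_from_digits:
  "\<forall>d \<in> set xs. d < b \<Longrightarrow> padded_digits b (length xs) (from_digits b xs) = rev xs"
  by (induction xs rule: rev_induct) (simp_all add: from_digits_snoc)

lemma reversal_eq_from_digits: "reversal b x = from_digits b (digits b x)"
  by (simp add: reversal_def repr_def)

lemma reversal_less_power: "b \<ge> 2 \<Longrightarrow> reversal b a < b ^ length (digits b a)"
  by (simp add: reversal_eq_from_digits from_digits_less_power digits_less_base)

lemma reversal_mult_power: "b \<ge> 2 \<Longrightarrow> reversal b (a * b ^ z) = reversal b a"
  using digits_mult_power_add[of b a 0 z]
  by (cases "a = 0") (simp_all add: reversal_eq_from_digits padded_digits_0
      from_digits_replicate_0_append)

lemma one_add_mult_le_power: "b > 0 \<Longrightarrow> 1 + (b - 1) * z \<le> (b::nat) ^ z"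
proof (induction z)
  case (Suc z)
  have "1 + (b - 1) * Suc z = (1 + (b - 1) * z) + (b - 1)"
    by simp
  also have "\<dots> \<le> b ^ z + (b - 1) * b ^ z"
    using Suc by (intro add_mono) simp_all
  also have "\<dots> = b ^ Suc z"
    using Suc.prems by (simp add: algebra_simps)
  finally show ?case .
qed simp

lemma wARH_add_reversal:
  assumes "M > 0" "digit_sum b (M + reversal b M) \<le> M"
  shows "wARH b (M + reversal b M)"
  unfolding wARH_def
  using assms by (auto intro!: exI[of _ "M - digit_sum b (M + reversal b M)"])

lemma digit_sum_mult_power_add_le:
  assumes "b \<ge> 2" "a > 0" "c < b ^ z"
  shows "digit_sum b (a * b ^ z + c) \<le> z * (b - 1) + a"
proof -
  have "sum_list (padded_digits b z c) \<le> sum_list (map (\<lambda>_. b - 1) (padded_digits b z c))"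
    using padded_digits_less_base[OF assms(1)]
    by (intro sum_list_mono[of _ id, simplified]) fastforce
  then have "sum_list (padded_digits b z c) \<le> z * (b - 1)"
    by (simp add: sum_list_triv)
  then show ?thesis
    using digit_sum_le[OF assms(1), of a] assms
    by (simp add: digit_sum_def digits_mult_power_add)
qed

lemma wARH_mult_power_add_reversal:
  assumes "b \<ge> 2" "a > 0" "length (digits b a) \<le> z"
  shows "wARH b (a * b ^ z + reversal b a)"
proof -
  have "reversal b a < b ^ z"
    using reversal_less_power[OF assms(1), of a] power_increasing[OF assms(3), of b] assms(1)
    by linarith
  then have "digit_sum b (a * b ^ z + reversal b a) \<le> z * (b - 1) + a"
    using digit_sum_mult_power_add_le assms by blast
  also have "\<dots> \<le> a * (1 + (b - 1) * z)"
    using assms(2) mult_le_mono1[of 1 a "(b - 1) * z"] by (simp add: algebra_simps)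
  also have "\<dots> \<le> a * b ^ z"
    using assms(1) by (intro mult_le_mono2 one_add_mult_le_power) simp
  finally show ?thesis
    using wARH_add_reversal[of "a * b ^ z" b] assms by (simp add: reversal_mult_power)
qed

lemma infinite_wARH_extending_repr:
  assumes "b \<ge> 2" "a > 0"
  shows "infinite {N. wARH b N \<and> (\<exists>v. repr b N = repr b a @ v)}"
  unfolding infinite_nat_iff_unbounded_le
proof
  fix m
  define z where "z = m + length (digits b a)"
  define N where "N = a * b ^ z + reversal b a"
  have "reversal b a < b ^ length (digits b a)"
    using reversal_less_power[OF assms(1)] .
  also have "\<dots> \<le> b ^ z"
    using assms(1) by (intro power_increasing) (simp_all add: z_def)
  finally have "repr b N = repr b a @ rev (padded_digits b z (reversal b a))"
    using repr_mult_power_add[OF assms] by (simp add: N_def)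
  moreover have "wARH b N"
    using wARH_mult_power_add_reversal[OF assms] by (simp add: N_def z_def)
  moreover have "m \<le> N"
  proof -
    have "m \<le> z"
      by (simp add: z_def)
    also have "\<dots> < 2 ^ z"
      by (rule less_exp)
    also have "\<dots> \<le> b ^ z"
      using assms(1) by (intro power_mono) simp_all
    also have "\<dots> \<le> N"
      unfolding N_def using assms(2) by (intro trans_le_add1) simp
    finally show ?thesis by simp
  qed
  ultimately show "\<exists>N \<ge> m. N \<in> {N. wARH b N \<and> (\<exists>v. repr b N = repr b a @ v)}"
    by blast
qed

lemma repr_power_add_from_digits:
  assumes "b \<ge> 2" "\<forall>d \<in> set xs. d < b"
  shows "repr b (b ^ length xs + from_digits b xs) = 1 # xs"
proof -
  have "repr b 1 = [1]"
    using assms(1) by (simp add: repr_def digits_nonzero)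
  then show ?thesis
    using repr_mult_power_add[OF assms(1) zero_less_one from_digits_less_power[OF assms]]
      padded_digits_from_digits[OF assms(2)] by simp
qed

theorem corollary5:
  fixes b :: nat and I :: "nat list"
  assumes "b \<ge> 2" and "I \<noteq> []" and "\<forall>d \<in> set I. d < b"
  shows "infinite {N. wARH b N \<and> contiguous_sub I (repr b N)}"
proof (rule infinite_super)
  define a where "a = b ^ length I + from_digits b I"
  have "repr b a = [1] @ I"
    using repr_power_add_from_digits[OF assms(1,3)] by (simp add: a_def)
  then show "{N. wARH b N \<and> (\<exists>v. repr b N = repr b a @ v)}
      \<subseteq> {N. wARH b N \<and> contiguous_sub I (repr b N)}"
    unfolding contiguous_sub_def by (auto simp del: append_Cons append_Nil)
  show "infinite {N. wARH b N \<and> (\<exists>v. repr b N = repr b a @ v)}"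
    using infinite_wARH_extending_repr[OF assms(1)] assms(1) by (simp add: a_def)
qed

end
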